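(* For every even integer $k\ge 0$ and each sign $\pm$, $h^{\pm}_k(2)=t^{\pm}_k(2)$.
   Context: Fix a permutation $(a,b,c)$ of $(1,2,3)$. $T_\pm$ is the directed graph on vertices $abc,bca,cab$ having both arcs between each pair; the clockwise arcs $abc\to cab$, $cab\to bca$, $bca\to abc$ have sign $+$ and their reverses sign $-$. $H_\pm$ is the directed graph on the $6$-cycle $aba-bcc-aab-cbc-baa-ccb-aba$ with both arcs for each edge; the clockwise direction is $aba\to ccb\to baa\to cbc\to aab\to bcc\to aba$, clockwise arcs have sign $-$ and counterclockwise arcs (their reverses) sign $+$. A walk is positive (negative) if the product of the signs of its arcs is $+$ ($-$). For vertices $x,y$ such that the clockwise path from $x$ to $y$ has length $\ell$, $t^{+}_k(\ell)$ (resp. $t^-_k(\ell)$) is the number of positive (resp. negative) walks of length $k$ from $x$ to $y$ in $T_\pm$, and $h^{\pm}_k(\ell)$ is defined analogously in $H_\pm$. *)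

theory Defs
  imports Main
begin

text \<open>A signed "cycle" digraph: the vertices are listed in clockwise order in vs;
  every edge of the cycle carries both arcs; clockwise arcs have sign s,
  counterclockwise arcs have sign -s.\<close>

definition cw :: "'v list \<Rightarrow> 'v \<Rightarrow> 'v \<Rightarrow> bool" where
  "cw vs u v \<longleftrightarrow> (\<exists>i<length vs. u = vs ! i \<and> v = vs ! ((i + 1) mod length vs))"

definition arc :: "'v list \<Rightarrow> 'v \<Rightarrow> 'v \<Rightarrow> bool" where
  "arc vs u v \<longleftrightarrow> cw vs u v \<or> cw vs v u"

definition asign :: "'v list \<Rightarrow> int \<Rightarrow> 'v \<Rightarrow> 'v \<Rightarrow> int" where
  "asign vs s u v = (if cw vs u v then s else - s)"

text \<open>Walks of length k from x to y, as vertex sequences (each ordered pair of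
  vertices carries at most one arc in the graphs considered, as length vs \<ge> 3).\<close>
definition walks :: "'v list \<Rightarrow> nat \<Rightarrow> 'v \<Rightarrow> 'v \<Rightarrow> 'v list set" where
  "walks vs k x y = {ws. length ws = k + 1 \<and> ws ! 0 = x \<and> ws ! k = y \<and>
      (\<forall>i<k. arc vs (ws ! i) (ws ! (i + 1)))}"

definition wsign :: "'v list \<Rightarrow> int \<Rightarrow> 'v list \<Rightarrow> int" where
  "wsign vs s ws = (\<Prod>i<length ws - 1. asign vs s (ws ! i) (ws ! (i + 1)))"

definition nwalks :: "'v list \<Rightarrow> int \<Rightarrow> int \<Rightarrow> nat \<Rightarrow> 'v \<Rightarrow> 'v \<Rightarrow> nat" where
  "nwalks vs s \<sigma> k x y = card {ws \<in> walks vs k x y. wsign vs s ws = \<sigma>}"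

definition cwdist :: "'v list \<Rightarrow> 'v \<Rightarrow> 'v \<Rightarrow> nat \<Rightarrow> bool" where
  "cwdist vs x y l \<longleftrightarrow> l < length vs \<and>
     (\<exists>i<length vs. x = vs ! i \<and> y = vs ! ((i + l) mod length vs))"

definition T_cyc :: "nat \<Rightarrow> nat \<Rightarrow> nat \<Rightarrow> nat list list" where
  "T_cyc a b c = [[a,b,c], [c,a,b], [b,c,a]]"

definition T_sign :: int where "T_sign = 1"

definition H_cyc :: "nat \<Rightarrow> nat \<Rightarrow> nat \<Rightarrow> nat list list" where
  "H_cyc a b c = [[a,b,a], [c,c,b], [b,a,a], [c,b,c], [a,a,b], [b,c,c]]"

definition H_sign :: int where "H_sign = -1"

end

theory Submission
  imports Defs
begin

text \<open>On a cycle of length n \<ge> 3 whose clockwise arcs have sign s, a walk is a sequence of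
  clockwise/counterclockwise steps, so the number of walks with given length, sign and
  clockwise displacement satisfies a recursion depending only on n and s. For odd m, the
  2m-cycle with sign -s is a double cover of the m-cycle with sign s (by the Chinese
  remainder theorem): displacements of the wrong parity are unreachable, and reversing all
  arc signs multiplies the sign of a walk of length k by (-1)^k. For m = 3 and even k both
  effects disappear at displacement 2.\<close>

text \<open>Walks of length k on the n-cycle, with clockwise displacement d and sign \<sigma>, clockwise
  arcs having sign s.\<close>
fun cycle_walk_count :: "nat \<Rightarrow> int \<Rightarrow> nat \<Rightarrow> int \<Rightarrow> int \<Rightarrow> nat" where
  "cycle_walk_count n s 0 d \<sigma> = (if int n dvd d \<and> \<sigma> = 1 then 1 else 0)"
| "cycle_walk_count n s (Suc k) d \<sigma> =
     cycle_walk_count n s k (d - 1) (\<sigma> * s) + cycle_walk_count n s k (d + 1) (\<sigma> * - s)"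

lemma dvd_double_odd_iff:
  fixes d :: int
  assumes "odd m"
  shows "2 * m dvd d \<longleftrightarrow> even d \<and> m dvd d"
proof
  assume "even d \<and> m dvd d"
  moreover have "coprime 2 m" using assms by simp
  ultimately show "2 * m dvd d" by (simp add: divides_mult)
qed auto

lemma cycle_walk_count_double:
  assumes "odd m"
  shows "cycle_walk_count (2 * m) (- s) k d \<sigma> =
    (if even (int k + d) then cycle_walk_count m s k d (\<sigma> * (-1) ^ k) else 0)"
proof (induction k arbitrary: d \<sigma>)
  case 0
  have "odd (int m)" using assms by simp
  then show ?case using dvd_double_odd_iff[of "int m" d] by simp
next
  case (Suc k)
  show ?case by (simp only: cycle_walk_count.simps Suc.IH) (auto simp: algebra_simps)
qed

lemma arc_in_set:
  assumes "arc vs u v"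
  shows "u \<in> set vs" "v \<in> set vs"
  using assms unfolding arc_def cw_def by (auto intro!: nth_mem mod_less_divisor)

lemma walks_finite: "finite (walks vs k x y)"
proof -
  have "walks vs k x y \<subseteq> {ws. set ws \<subseteq> insert x (set vs) \<and> length ws = Suc k}"
  proof (intro subsetI CollectI conjI)
    fix ws z assume ws: "ws \<in> walks vs k x y" and "z \<in> set ws"
    then obtain j where j: "j < length ws" "z = ws ! j" by (metis in_set_conv_nth)
    show "z \<in> insert x (set vs)"
      using ws j by (cases j) (auto simp: walks_def dest: arc_in_set(2))
  qed (simp add: walks_def)
  moreover have "finite {ws. set ws \<subseteq> insert x (set vs) \<and> length ws = Suc k}"
    by (rule finite_lists_length_eq) simp
  ultimately show ?thesis by (rule finite_subset)
qed

lemma walks_Suc: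
  "walks vs (Suc k) x y = (\<Union>u\<in>{u. arc vs u y}. (\<lambda>ws. ws @ [y]) ` walks vs k x u)"
proof (intro set_eqI iffI)
  fix ws' assume w: "ws' \<in> walks vs (Suc k) x y"
  then have len: "length ws' = k + 2" by (simp add: walks_def)
  then have ne: "ws' \<noteq> []" by auto
  with w len have "last ws' = y" by (simp add: walks_def last_conv_nth)
  with ne have "ws' = butlast ws' @ [y]" by (metis append_butlast_last_id)
  moreover have "butlast ws' \<in> walks vs k x (ws' ! k)"
    using w len by (auto simp: walks_def nth_butlast)
  moreover have "arc vs (ws' ! k) y" using w by (auto simp: walks_def)
  ultimately show "ws' \<in> (\<Union>u\<in>{u. arc vs u y}. (\<lambda>ws. ws @ [y]) ` walks vs k x u)" by blast
next
  fix ws' assume "ws' \<in> (\<Union>u\<in>{u. arc vs u y}. (\<lambda>ws. ws @ [y]) ` walks vs k x u)"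
  then obtain u ws where "arc vs u y" "ws \<in> walks vs k x u" "ws' = ws @ [y]" by blast
  then show "ws' \<in> walks vs (Suc k) x y"
    by (auto simp: walks_def nth_append less_Suc_eq)
qed

lemma wsign_snoc:
  assumes "ws \<in> walks vs k x u"
  shows "wsign vs s (ws @ [y]) = wsign vs s ws * asign vs s u y"
proof -
  have len: "length ws = Suc k" and last: "ws ! k = u" using assms by (auto simp: walks_def)
  have "wsign vs s (ws @ [y]) = (\<Prod>i<Suc k. asign vs s ((ws @ [y]) ! i) ((ws @ [y]) ! Suc i))"
    using len by (simp add: wsign_def)
  also have "\<dots> = wsign vs s ws * asign vs s u y"
    using len last by (simp add: wsign_def nth_append)
  finally show ?thesis .
qed

lemma asign_squared:
  assumes "s * s = 1"
  shows "asign vs s u v * asign vs s u v = 1"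
  using assms by (simp add: asign_def)

lemma nwalks_Suc:
  assumes "s * s = 1"
  shows "nwalks vs s \<sigma> (Suc k) x y =
    (\<Sum>u | arc vs u y. nwalks vs s (\<sigma> * asign vs s u y) k x u)"
proof -
  let ?S = "\<lambda>u. {ws \<in> walks vs k x u. wsign vs s ws = \<sigma> * asign vs s u y}"
  have sign_iff: "wsign vs s ws * asign vs s u y = \<sigma> \<longleftrightarrow> wsign vs s ws = \<sigma> * asign vs s u y" for ws u
    using asign_squared[OF assms, where u=u and v=y] by (metis mult.assoc mult.right_neutral)
  have "{ws \<in> walks vs (Suc k) x y. wsign vs s ws = \<sigma>} = (\<Union>u\<in>{u. arc vs u y}. (\<lambda>ws. ws @ [y]) ` ?S u)"
    unfolding walks_Suc using wsign_snoc sign_iff by fastforce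
  moreover have "finite {u. arc vs u y}"
    by (rule finite_subset[of _ "set vs"]) (auto dest: arc_in_set(1))
  moreover have "finite (?S u)" for u by (simp add: walks_finite)
  moreover have "(\<lambda>ws. ws @ [y]) ` ?S u \<inter> (\<lambda>ws. ws @ [y]) ` ?S u' = {}" if "u \<noteq> u'" for u u'
    using that by (auto simp: walks_def)
  moreover have "card ((\<lambda>ws. ws @ [y]) ` ?S u) = card (?S u)" for u
    by (rule card_image) (simp add: inj_on_def)
  ultimately show ?thesis by (simp add: nwalks_def card_UN_disjoint)
qed

lemma nwalks_0: "nwalks vs s \<sigma> 0 x y = (if x = y \<and> \<sigma> = 1 then 1 else 0)"
proof -
  have "{ws \<in> walks vs 0 x y. wsign vs s ws = \<sigma>} = (if x = y \<and> \<sigma> = 1 then {[x]} else {})"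
    by (auto simp: walks_def wsign_def length_Suc_conv)
  then show ?thesis by (simp add: nwalks_def)
qed

locale signed_cycle =
  fixes vs :: "'v list" and s :: int
  assumes distinct: "distinct vs" and length_ge_3: "3 \<le> length vs" and sign_squared: "s * s = 1"
begin

definition vertex :: "int \<Rightarrow> 'v" where
  "vertex d = vs ! nat (d mod int (length vs))"

lemma length_pos: "0 < int (length vs)"
  using length_ge_3 by linarith

lemma vertex_of_nat: "vertex (int j) = vs ! (j mod length vs)"
  by (simp add: vertex_def flip: of_nat_mod)

lemma vertex_eq_iff: "vertex d = vertex e \<longleftrightarrow> int (length vs) dvd d - e"
proof -
  have idx: "nat (d mod int (length vs)) < length vs" for d
    using length_pos by (simp add: nat_less_iff)
  have "vertex d = vertex e \<longleftrightarrow> nat (d mod int (length vs)) = nat (e mod int (length vs))"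
    unfolding vertex_def using distinct idx by (simp add: nth_eq_iff_index_eq)
  also have "\<dots> \<longleftrightarrow> d mod int (length vs) = e mod int (length vs)"
    using length_pos by (auto simp: nat_eq_iff2)
  finally show ?thesis by (metis mod_eq_dvd_iff)
qed

lemma cw_iff: "cw vs u v \<longleftrightarrow> (\<exists>d. u = vertex d \<and> v = vertex (d + 1))"
proof
  assume "cw vs u v"
  then obtain i where "i < length vs" "u = vs ! i" "v = vs ! (Suc i mod length vs)"
    by (auto simp: cw_def)
  then have "u = vertex (int i) \<and> v = vertex (int i + 1)"
    using vertex_of_nat[of i] vertex_of_nat[of "Suc i"] by (simp add: add.commute)
  then show "\<exists>d. u = vertex d \<and> v = vertex (d + 1)" by blast
next
  assume "\<exists>d. u = vertex d \<and> v = vertex (d + 1)"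
  then obtain d where d: "u = vertex d" "v = vertex (d + 1)" by blast
  define i where "i = nat (d mod int (length vs))"
  have "i < length vs" using length_pos by (simp add: i_def nat_less_iff)
  moreover have "int (length vs) dvd d - int i" "int (length vs) dvd (d + 1) - int (Suc i)"
    using length_pos by (simp_all add: i_def mod_eq_dvd_iff[symmetric])
  then have "vertex d = vertex (int i)" "vertex (d + 1) = vertex (int (Suc i))"
    by (simp_all only: vertex_eq_iff)
  then have "u = vs ! i" "v = vs ! (Suc i mod length vs)"
    using d vertex_of_nat[of i] vertex_of_nat[of "Suc i"] \<open>i < length vs\<close>
    by (simp_all del: of_nat_Suc)
  ultimately show "cw vs u v" by (auto simp: cw_def)
qed

lemma cw_into_vertex: "cw vs u (vertex d) \<longleftrightarrow> u = vertex (d - 1)"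
proof -
  have "vertex (e + 1) = vertex d \<longleftrightarrow> vertex e = vertex (d - 1)" for e
    by (simp add: vertex_eq_iff algebra_simps)
  then show ?thesis by (metis cw_iff diff_add_cancel)
qed

lemma cw_from_vertex: "cw vs (vertex d) v \<longleftrightarrow> v = vertex (d + 1)"
proof -
  have "vertex e = vertex d \<longleftrightarrow> vertex (e + 1) = vertex (d + 1)" for e
    by (simp add: vertex_eq_iff)
  then show ?thesis by (metis cw_iff)
qed

lemma vertex_pred_ne_succ: "vertex (d - 1) \<noteq> vertex (d + 1)"
proof
  assume "vertex (d - 1) = vertex (d + 1)"
  then have "int (length vs) dvd 2" by (simp add: vertex_eq_iff)
  then have "int (length vs) \<le> 2" by (rule zdvd_imp_le) simp
  with length_ge_3 show False by simp
qed

lemma arcs_into_vertex: "{u. arc vs u (vertex d)} = {vertex (d - 1), vertex (d + 1)}"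
  by (auto simp: arc_def cw_into_vertex cw_from_vertex)

lemma asign_from_pred: "asign vs s (vertex (d - 1)) (vertex d) = s"
  by (simp add: asign_def cw_into_vertex)

lemma asign_from_succ: "asign vs s (vertex (d + 1)) (vertex d) = - s"
  using vertex_pred_ne_succ[of d] by (simp add: asign_def cw_into_vertex)

lemma nwalks_vertex:
  "nwalks vs s \<sigma> k (vertex e) (vertex d) = cycle_walk_count (length vs) s k (d - e) \<sigma>"
proof (induction k arbitrary: d \<sigma>)
  case 0
  then show ?case by (auto simp: nwalks_0 vertex_eq_iff dvd_diff_commute)
next
  case (Suc k)
  have "nwalks vs s \<sigma> (Suc k) (vertex e) (vertex d) =
      nwalks vs s (\<sigma> * s) k (vertex e) (vertex (d - 1)) + nwalks vs s (\<sigma> * - s) k (vertex e) (vertex (d + 1))"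
    using vertex_pred_ne_succ[of d]
    by (simp add: nwalks_Suc[OF sign_squared] arcs_into_vertex asign_from_pred asign_from_succ)
  then show ?case by (simp add: Suc.IH algebra_simps)
qed

lemma nwalks_cwdist:
  assumes "cwdist vs x y l"
  shows "nwalks vs s \<sigma> k x y = cycle_walk_count (length vs) s k (int l) \<sigma>"
proof -
  obtain i where "i < length vs" "x = vs ! i" "y = vs ! ((i + l) mod length vs)"
    using assms by (auto simp: cwdist_def)
  then have "x = vertex (int i)" "y = vertex (int (i + l))"
    by (simp_all only: vertex_of_nat mod_less)
  then show ?thesis by (simp add: nwalks_vertex)
qed

end

lemma distinct_of_set_eq_123:
  assumes "{a, b, c} = {1, 2, 3 :: nat}"
  shows "distinct [a, b, c]"
  using assms by (intro card_distinct) simp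

lemma signed_cycle_H: "distinct [a, b, c] \<Longrightarrow> signed_cycle (H_cyc a b c) H_sign"
  by unfold_locales (auto simp: H_cyc_def H_sign_def)

lemma signed_cycle_T: "distinct [a, b, c] \<Longrightarrow> signed_cycle (T_cyc a b c) T_sign"
  by unfold_locales (auto simp: T_cyc_def T_sign_def)

theorem lemma12:
  fixes a b c :: nat and k :: nat and \<sigma> :: int
    and x y :: "nat list" and x' y' :: "nat list"
  assumes "{a, b, c} = {1, 2, 3}"
    and "even k"
    and "\<sigma> = 1 \<or> \<sigma> = -1"
    and "cwdist (H_cyc a b c) x y 2"
    and "cwdist (T_cyc a b c) x' y' 2"
  shows "nwalks (H_cyc a b c) H_sign \<sigma> k x y = nwalks (T_cyc a b c) T_sign \<sigma> k x' y'"
proof -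
  have abc: "distinct [a, b, c]" using assms(1) by (rule distinct_of_set_eq_123)
  interpret H: signed_cycle "H_cyc a b c" H_sign using abc by (rule signed_cycle_H)
  interpret T: signed_cycle "T_cyc a b c" T_sign using abc by (rule signed_cycle_T)
  have H_length: "length (H_cyc a b c) = 2 * 3" and T_length: "length (T_cyc a b c) = 3"
    by (simp_all add: H_cyc_def T_cyc_def)
  have "nwalks (H_cyc a b c) H_sign \<sigma> k x y = cycle_walk_count (2 * 3) (- 1) k 2 \<sigma>"
    using H.nwalks_cwdist[OF assms(4)] unfolding H_length H_sign_def by simp
  also have "\<dots> = cycle_walk_count 3 1 k 2 \<sigma>"
    using cycle_walk_count_double[of 3 1 k 2 \<sigma>] assms(2) by simp
  also have "\<dots> = nwalks (T_cyc a b c) T_sign \<sigma> k x' y'"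
    using T.nwalks_cwdist[OF assms(5)] unfolding T_length T_sign_def by simp
  finally show ?thesis .
qed

end
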